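(* Let $\tau\subseteq\sigma$ be two topologies on a set $X$. If $(X,\tau,\mathcal{HK}_\tau)$ is a $T_{\mathcal{HK}_\tau}$-space, then $(X,\sigma,\mathcal{HK}_\sigma)$ is a $T_{\mathcal{HK}_\sigma}$-space.
   Context: For a topology $\rho$ on $X$, $\mathcal{HK}_\rho$ denotes the ideal of $\rho$-hereditarily compact subsets of $X$, i.e. sets all of whose subsets are $\rho$-compact. For an ideal $\mathcal{I}$, $(X,\rho,\mathcal{I})$ is a $T_{\mathcal{I}}$-space if for every $I\in\mathcal{I}$ and every $x\in X\setminus I$ there is a set $A_x$ with $x\in A_x$, $A_x\cap I=\emptyset$, and $A_x$ $\rho$-open or $\rho$-closed. *)

theory Defs
  imports "HOL-Analysis.Analysis"
begin

definition HK :: "'a topology \<Rightarrow> 'a set set" where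
  "HK T = {A. \<forall>B. B \<subseteq> A \<longrightarrow> compactin T B}"

definition T_ideal_space :: "'a topology \<Rightarrow> 'a set set \<Rightarrow> bool" where
  "T_ideal_space T \<I> \<longleftrightarrow>
     (\<forall>I\<in>\<I>. \<forall>x\<in>topspace T - I.
        \<exists>A. x \<in> A \<and> A \<inter> I = {} \<and> (openin T A \<or> closedin T A))"

end

theory Submission
  imports Defs
begin

text \<open>A finer topology has fewer compact sets, hence a smaller ideal of hereditarily compact
  sets, while it has more open and more closed sets. Both effects make the separation property
  of a T_I-space easier to satisfy.\<close>

lemma HK_antimono:
  assumes "topspace \<tau> = topspace \<sigma>"
    and "\<And>U. openin \<tau> U \<Longrightarrow> openin \<sigma> U"
  shows "HK \<sigma> \<subseteq> HK \<tau>"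
  using compactin_contractive[where X' = \<sigma> and X = \<tau>] assms unfolding HK_def by auto

lemma T_ideal_space_finer_antimono:
  assumes "topspace \<tau> = topspace \<sigma>"
    and finer: "\<And>U. openin \<tau> U \<Longrightarrow> openin \<sigma> U"
    and "\<J> \<subseteq> \<I>"
    and "T_ideal_space \<tau> \<I>"
  shows "T_ideal_space \<sigma> \<J>"
  unfolding T_ideal_space_def
proof (intro ballI)
  fix I x
  assume "I \<in> \<J>" and "x \<in> topspace \<sigma> - I"
  with assms(1,3,4) obtain A where "x \<in> A" "A \<inter> I = {}" "openin \<tau> A \<or> closedin \<tau> A"
    unfolding T_ideal_space_def by (metis subsetD)
  moreover have "closedin \<tau> A \<Longrightarrow> closedin \<sigma> A"
    using topology_finer_closedin[of \<sigma> \<tau>] assms(1) finer by auto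
  ultimately show "\<exists>A. x \<in> A \<and> A \<inter> I = {} \<and> (openin \<sigma> A \<or> closedin \<sigma> A)"
    using finer by blast
qed

theorem mainTheorem5:
  fixes \<tau> \<sigma> :: "'a topology"
  assumes "topspace \<tau> = topspace \<sigma>"
    and "\<And>U. openin \<tau> U \<Longrightarrow> openin \<sigma> U"
    and "T_ideal_space \<tau> (HK \<tau>)"
  shows "T_ideal_space \<sigma> (HK \<sigma>)"
  using T_ideal_space_finer_antimono[OF assms(1,2) HK_antimono[OF assms(1,2)] assms(3)] .

end
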